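(* Let $X$ be a Banach space as described in the context and let $f\in X$. Then $f$ is (the restriction to $\mathbb{D}$ of) an entire function if and only if $$\lim_{n\to\infty}\big(E_n(f)\big)^{1/n}=0 .$$
   Context: $\mathbb{D}=\{z\in\mathbb{C}:|z|<1\}$. $X$ is a complex Banach space of functions analytic in $\mathbb{D}$ whose norm $\|\cdot\|$ satisfies: (i) $\|f(\cdot\, e^{it})\|=\|f(\cdot)\|$ for all $t\in\mathbb{R}$ and $f\in X$; (ii) $\|f\|<\infty$ for every entire function $f$ (i.e. $X$ contains all entire functions); (iii) for all $f\in X$ and $g\in L[0,2\pi]$, $\big\|\frac{1}{2\pi}\int_0^{2\pi} f(ze^{it})g(t)\,dt\big\|\le \frac{1}{2\pi}\int_0^{2\pi}|g(t)|\,dt\cdot\|f\|$ (the norm on the left is of the function of $z$). For $n\ge 1$, $\mathcal{P}_n$ is the set of complex algebraic polynomials of degree at most $n-1$, and $E_n(f)=\inf_{p\in\mathcal{P}_n}\|f-p\|$. *)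

theory Defs
  imports "HOL-Analysis.Analysis"
begin

text \<open>Functions on the unit disc are represented as functions complex => complex
  that vanish outside the open unit disc (extensional convention).\<close>

definition restrD :: "(complex \<Rightarrow> complex) \<Rightarrow> complex \<Rightarrow> complex" where
  "restrD h = (\<lambda>z. if z \<in> ball 0 1 then h z else 0)"

definition banach_fun_space :: "(complex \<Rightarrow> complex) set \<Rightarrow> ((complex \<Rightarrow> complex) \<Rightarrow> real) \<Rightarrow> bool" where
  "banach_fun_space X N \<longleftrightarrow>
     (\<forall>f\<in>X. f analytic_on ball 0 1 \<and> (\<forall>z. z \<notin> ball 0 1 \<longrightarrow> f z = 0)) \<and>
     (\<lambda>z. 0) \<in> X \<and>
     (\<forall>f\<in>X. \<forall>g\<in>X. (\<lambda>z. f z + g z) \<in> X) \<and>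
     (\<forall>f\<in>X. \<forall>c. (\<lambda>z. c * f z) \<in> X) \<and>
     (\<forall>f\<in>X. 0 \<le> N f) \<and>
     (\<forall>f\<in>X. N f = 0 \<longleftrightarrow> f = (\<lambda>z. 0)) \<and>
     (\<forall>f\<in>X. \<forall>c. N (\<lambda>z. c * f z) = cmod c * N f) \<and>
     (\<forall>f\<in>X. \<forall>g\<in>X. N (\<lambda>z. f z + g z) \<le> N f + N g) \<and>
     (\<forall>u. (\<forall>n. u n \<in> X) \<longrightarrow>
          (\<forall>e>0. \<exists>M. \<forall>m\<ge>M. \<forall>n\<ge>M. N (\<lambda>z. u m z - u n z) < e) \<longrightarrow>
          (\<exists>f\<in>X. (\<lambda>n. N (\<lambda>z. u n z - f z)) \<longlonglongrightarrow> 0))"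

definition rot_invariant :: "(complex \<Rightarrow> complex) set \<Rightarrow> ((complex \<Rightarrow> complex) \<Rightarrow> real) \<Rightarrow> bool" where
  "rot_invariant X N \<longleftrightarrow>
     (\<forall>f\<in>X. \<forall>t::real. (\<lambda>z. f (z * cis t)) \<in> X \<and> N (\<lambda>z. f (z * cis t)) = N f)"

definition contains_entire :: "(complex \<Rightarrow> complex) set \<Rightarrow> bool" where
  "contains_entire X \<longleftrightarrow> (\<forall>h. h holomorphic_on UNIV \<longrightarrow> restrD h \<in> X)"

definition conv_bound :: "(complex \<Rightarrow> complex) set \<Rightarrow> ((complex \<Rightarrow> complex) \<Rightarrow> real) \<Rightarrow> bool" where
  "conv_bound X N \<longleftrightarrow>
     (\<forall>f\<in>X. \<forall>g::real \<Rightarrow> complex. set_integrable lborel {0..2*pi} g \<longrightarrow>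
        (let F = restrD (\<lambda>z. (1 / (2 * pi)) * (LINT t:{0..2*pi}|lborel. f (z * cis t) * g t))
         in F \<in> X \<and> N F \<le> (1 / (2 * pi)) * (LINT t:{0..2*pi}|lborel. cmod (g t)) * N f))"

definition polys :: "nat \<Rightarrow> (complex \<Rightarrow> complex) set" where
  "polys n = {restrD (\<lambda>z. \<Sum>k<n. c k * z ^ k) | c. True}"

definition best_approx :: "((complex \<Rightarrow> complex) \<Rightarrow> real) \<Rightarrow> nat \<Rightarrow> (complex \<Rightarrow> complex) \<Rightarrow> real" where
  "best_approx N n f = (INF p\<in>polys n. N (\<lambda>z. f z - p z))"

end

theory Submission
  imports Defs "HOL-Complex_Analysis.Complex_Analysis"
begin

text \<open>If \<open>f\<close> extends to an entire function \<open>H\<close>, convolve \<open>H(R z)\<close> with the kernel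
  \<open>\<Sum>k\<ge>n. R^-k e^(-ikt)\<close>: this removes the Taylor polynomial of degree \<open>n - 1\<close>, and since the kernel is
  bounded by \<open>2 R^-n\<close>, condition (iii) gives \<open>E_n(f) \<le> 2 R^-n \<parallel>H(R z)\<parallel>\<close> for every \<open>R \<ge> 2\<close>.
  Conversely, convolution with \<open>e^(-ikt)\<close> isolates the \<open>k\<close>-th Taylor term, so \<open>|c_k| \<parallel>z^k\<parallel> \<le> E_k(f)\<close>;
  completeness of \<open>X\<close> forces \<open>\<parallel>z^k\<parallel> \<ge> 4^-k\<close> for large \<open>k\<close>, hence \<open>|c_k| \<le> 4^k E_k(f)\<close> and the
  Taylor series of \<open>f\<close> converges in the whole plane.\<close>

subsection \<open>Fourier coefficients of power series on circles\<close>

lemma integral_cis_int: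
  fixes m :: int
  shows "(LINT t:{0..2*pi}|lborel. cis (of_int m * t)) = (if m = 0 then 2*pi else 0)"
proof (cases "m = 0")
  case True
  have "(LINT t:{0..2*pi}|lborel. cis (of_int m * t)) = (LINT t:{0..2*pi}|lborel. (1::complex))"
    using True by simp
  also have "\<dots> = 2*pi"
    unfolding set_lebesgue_integral_def
    by (subst integral_FTC_atLeastAtMost[where F="\<lambda>t. complex_of_real t"])
       (auto intro!: derivative_eq_intros simp: has_vector_derivative_def fun_eq_iff scaleR_conv_of_real)
  finally show ?thesis using True by simp
next
  case False
  have cis_exp: "cis (of_int m * t) = exp (t *\<^sub>R (\<i> * of_int m))" for t
    by (simp add: cis_conv_exp scaleR_conv_of_real mult_ac)
  let ?F = "\<lambda>t. exp (t *\<^sub>R (\<i> * of_int m)) / (\<i> * of_int m)"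
  have "(LINT t:{0..2*pi}|lborel. cis (of_int m * t)) = ?F (2*pi) - ?F 0"
    unfolding set_lebesgue_integral_def
  proof (rule integral_FTC_atLeastAtMost)
    fix x assume "0 \<le> x" "x \<le> 2*pi"
    have "((\<lambda>t. exp (t *\<^sub>R (\<i> * of_int m))) has_vector_derivative
           exp (x *\<^sub>R (\<i> * of_int m)) * (\<i> * of_int m)) (at x within {0..2*pi})"
      by (rule exp_scaleR_has_vector_derivative_right)
    then have "(?F has_vector_derivative
           exp (x *\<^sub>R (\<i> * of_int m)) * (\<i> * of_int m) / (\<i> * of_int m)) (at x within {0..2*pi})"
      by (rule has_vector_derivative_divide)
    then show "(?F has_vector_derivative cis (of_int m * x)) (at x within {0..2*pi})"
      using False by (simp add: cis_exp)
  qed (auto intro!: continuous_intros)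
  also have "\<dots> = 0"
  proof -
    have "exp ((2*pi) *\<^sub>R (\<i> * of_int m)) = cis (of_int m * (2*pi))"
      by (simp add: cis_exp)
    also have "\<dots> = 1"
      using cos_int_2pin[of m] sin_int_2pin[of m] by (simp add: cis.ctr complex_eq_iff mult_ac)
    finally show ?thesis by simp
  qed
  finally show ?thesis using False by simp
qed

lemma power_series_fourier_coeff:
  fixes c :: "nat \<Rightarrow> complex"
  assumes sums: "\<And>t. (\<lambda>j. c j * (z * cis t) ^ j) sums G (z * cis t)"
    and summ: "summable (\<lambda>j. norm (c j) * norm z ^ j)"
  shows "set_integrable lborel {0..2*pi} (\<lambda>t. G (z * cis t) * cis (- (real k * t)))"
    and "(LINT t:{0..2*pi}|lborel. G (z * cis t) * cis (- (real k * t))) = 2 * pi * c k * z ^ k"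
proof -
  define \<phi> where "\<phi> j t = indicator {0..2*pi} t *\<^sub>R (c j * (z * cis t) ^ j * cis (- (real k * t)))"
    for j t
  have int: "integrable lborel (\<phi> j)" for j
    unfolding \<phi>_def by (intro borel_integrable_compact) (auto intro!: continuous_intros)
  have norm_\<phi>: "norm (\<phi> j t) = indicator {0..2*pi} t * (norm (c j) * norm z ^ j)" for j t
    by (auto simp: \<phi>_def norm_mult norm_power split: split_indicator)
  have AE: "AE t in lborel. summable (\<lambda>j. norm (\<phi> j t))"
    unfolding norm_\<phi> by (intro AE_I2 summable_mult summ)
  have S: "summable (\<lambda>j. \<integral>t. norm (\<phi> j t) \<partial>lborel)"
    unfolding norm_\<phi> by (simp add: summable_mult summ)
  have sum_\<phi>: "(\<Sum>j. \<phi> j t) = indicator {0..2*pi} t *\<^sub>R (G (z * cis t) * cis (- (real k * t)))" for t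
  proof -
    have "(\<lambda>j. \<phi> j t) sums (indicator {0..2*pi} t *\<^sub>R (G (z * cis t) * cis (- (real k * t))))"
      unfolding \<phi>_def by (intro sums_scaleR_right sums_mult2 sums)
    then show ?thesis by (simp add: sums_iff)
  qed
  have integral_\<phi>: "integral\<^sup>L lborel (\<phi> j) = (if j = k then 2 * pi * c k * z ^ k else 0)" for j
  proof -
    have "(z * cis t) ^ j * cis (- (real k * t)) = z ^ j * cis (of_int (int j - int k) * t)" for t
      by (simp add: power_mult_distrib Complex.DeMoivre cis_mult algebra_simps)
    then have "integral\<^sup>L lborel (\<phi> j)
        = (LINT t:{0..2*pi}|lborel. (c j * z ^ j) * cis (of_int (int j - int k) * t))"
      unfolding \<phi>_def set_lebesgue_integral_def
      by (intro Bochner_Integration.integral_cong refl) (simp add: mult.assoc)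
    also have "\<dots> = (c j * z ^ j) * (LINT t:{0..2*pi}|lborel. cis (of_int (int j - int k) * t))"
      by (rule set_integral_mult_right)
    also have "\<dots> = (if j = k then 2 * pi * c k * z ^ k else 0)"
      using integral_cis_int[of "int j - int k"] by auto
    finally show ?thesis .
  qed
  have "integrable lborel (\<lambda>t. \<Sum>j. \<phi> j t)"
    by (rule integrable_suminf[OF int AE S])
  then show "set_integrable lborel {0..2*pi} (\<lambda>t. G (z * cis t) * cis (- (real k * t)))"
    unfolding set_integrable_def sum_\<phi> .
  have "(\<lambda>j. integral\<^sup>L lborel (\<phi> j)) sums (\<integral>t. (\<Sum>j. \<phi> j t) \<partial>lborel)"
    by (rule sums_integral[OF int AE S])
  then have "(\<lambda>j. if j = k then 2 * pi * c k * z ^ k else 0)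
      sums (LINT t:{0..2*pi}|lborel. G (z * cis t) * cis (- (real k * t)))"
    unfolding integral_\<phi> sum_\<phi> set_lebesgue_integral_def .
  then show "(LINT t:{0..2*pi}|lborel. G (z * cis t) * cis (- (real k * t))) = 2 * pi * c k * z ^ k"
    using sums_unique2 sums_single[of k "\<lambda>_. 2 * pi * c k * z ^ k"] by blast
qed

lemma norm_le_suminf_norm_power_series:
  fixes c :: "nat \<Rightarrow> 'a::{real_normed_div_algebra,banach}"
  assumes "(\<lambda>j. c j * w ^ j) sums G" and "summable (\<lambda>j. norm (c j) * norm w ^ j)"
  shows "norm G \<le> (\<Sum>j. norm (c j) * norm w ^ j)"
  using summable_norm[of "\<lambda>j. c j * w ^ j"] assms by (simp add: sums_iff norm_mult norm_power)

lemma power_series_kernel_integral: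
  fixes c d :: "nat \<Rightarrow> complex" and g :: "real \<Rightarrow> complex"
  assumes sums: "\<And>t. (\<lambda>j. c j * (z * cis t) ^ j) sums G (z * cis t)"
    and summ: "summable (\<lambda>j. norm (c j) * norm z ^ j)"
    and dsum: "summable (\<lambda>k. norm (d k))"
    and gs: "\<And>t. (\<lambda>k. d k * cis (- (real k * t))) sums g t"
  shows "(\<lambda>k. 2 * pi * d k * c k * z ^ k) sums (LINT t:{0..2*pi}|lborel. G (z * cis t) * g t)"
proof -
  define M where "M = (\<Sum>j. norm (c j) * norm z ^ j)"
  have bound: "norm (G (z * cis t)) \<le> M" for t
    using norm_le_suminf_norm_power_series[OF sums[of t]] summ by (simp add: M_def norm_mult)
  have M0: "0 \<le> M" using bound[of 0] norm_ge_zero order_trans by blast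
  define \<psi> where "\<psi> k t = d k * (indicator {0..2*pi} t *\<^sub>R (G (z * cis t) * cis (- (real k * t))))"
    for k t
  have int: "integrable lborel (\<psi> k)" for k
    unfolding \<psi>_def using power_series_fourier_coeff(1)[OF sums summ, of k]
    by (intro integrable_mult_right) (simp add: set_integrable_def)
  have norm_\<psi>: "norm (\<psi> k t) \<le> indicator {0..2*pi} t * (norm (d k) * M)" for k t
    using bound[of t] by (auto simp: \<psi>_def norm_mult mult_left_mono split: split_indicator)
  have AE: "AE t in lborel. summable (\<lambda>k. norm (\<psi> k t))"
  proof (intro AE_I2)
    fix t
    have le: "norm (\<psi> k t) \<le> norm (d k) * M" for k
      using norm_\<psi>[of k t] M0 by (cases "t \<in> {0..2*pi}") auto
    show "summable (\<lambda>k. norm (\<psi> k t))"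
      by (rule summable_comparison_test[where g="\<lambda>k. norm (d k) * M"])
         (use le in \<open>auto intro!: summable_mult2 dsum\<close>)
  qed
  have integral_norm_\<psi>: "(\<integral>t. norm (\<psi> k t) \<partial>lborel) \<le> 2 * pi * (norm (d k) * M)" for k
  proof -
    have "integrable lborel (\<lambda>t. indicator {0..2*pi} t * (norm (d k) * M))"
      by (intro integrable_mult_left) simp
    then have "(\<integral>t. norm (\<psi> k t) \<partial>lborel) \<le> (\<integral>t. indicator {0..2*pi} t * (norm (d k) * M) \<partial>lborel)"
      by (intro integral_mono integrable_norm int norm_\<psi>)
    then show ?thesis by simp
  qed
  have S: "summable (\<lambda>k. \<integral>t. norm (\<psi> k t) \<partial>lborel)"
    by (rule summable_comparison_test[where g="\<lambda>k. 2 * pi * (norm (d k) * M)"])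
       (use integral_norm_\<psi> dsum in \<open>auto intro!: summable_mult summable_mult2\<close>)
  have sum_\<psi>: "(\<Sum>k. \<psi> k t) = indicator {0..2*pi} t *\<^sub>R (G (z * cis t) * g t)" for t
  proof -
    have "(\<lambda>k. d k * cis (- (real k * t)) * (indicator {0..2*pi} t *\<^sub>R G (z * cis t))) sums
           (g t * (indicator {0..2*pi} t *\<^sub>R G (z * cis t)))"
      by (intro sums_mult2 gs)
    then have "(\<lambda>k. \<psi> k t) sums (indicator {0..2*pi} t *\<^sub>R (G (z * cis t) * g t))"
      unfolding \<psi>_def by (simp add: mult_ac split: split_indicator)
    then show ?thesis by (simp add: sums_iff)
  qed
  have integral_\<psi>: "integral\<^sup>L lborel (\<psi> k) = 2 * pi * d k * c k * z ^ k" for k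
    using power_series_fourier_coeff(2)[OF sums summ, of k]
    unfolding \<psi>_def set_lebesgue_integral_def integral_mult_right_zero by (simp add: mult_ac)
  have "(\<lambda>k. integral\<^sup>L lborel (\<psi> k)) sums (\<integral>t. (\<Sum>k. \<psi> k t) \<partial>lborel)"
    by (rule sums_integral[OF int AE S])
  then show ?thesis
    unfolding integral_\<psi> sum_\<psi> set_lebesgue_integral_def .
qed

subsection \<open>The kernel of the Taylor tail\<close>

definition tail_coeff :: "real \<Rightarrow> nat \<Rightarrow> nat \<Rightarrow> complex" where
  "tail_coeff R n k = (if n \<le> k then of_real ((1/R) ^ k) else 0)"

definition tail_kernel :: "real \<Rightarrow> nat \<Rightarrow> real \<Rightarrow> complex" where
  "tail_kernel R n t = (1/R) ^ n * cis (- (real n * t)) / (1 - cis (- t) / of_real R)"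

lemma tail_kernel_sums:
  assumes "R > 1"
  shows "(\<lambda>k. tail_coeff R n k * cis (- (real k * t))) sums tail_kernel R n t"
proof -
  define q where "q = cis (- t) / of_real R"
  have "norm q < 1" using assms by (simp add: q_def norm_divide)
  then have "(\<lambda>k. ((1/R) ^ n * cis (- (real n * t))) * q ^ k)
      sums (((1/R) ^ n * cis (- (real n * t))) * (1 / (1 - q)))"
    by (intro sums_mult geometric_sums)
  moreover have "((1/R) ^ n * cis (- (real n * t))) * q ^ k
      = of_real ((1/R) ^ (k + n)) * cis (- (real (k + n) * t))" for k
  proof -
    have "q ^ k = cis (- (real k * t)) / of_real R ^ k"
      by (simp add: q_def power_divide Complex.DeMoivre)
    moreover have "cis (- (real n * t)) * cis (- (real k * t)) = cis (- (real (k + n) * t))"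
      by (simp add: cis_mult algebra_simps)
    ultimately show ?thesis
      by (simp add: power_add power_divide field_simps)
  qed
  ultimately have "(\<lambda>k. of_real ((1/R) ^ (k + n)) * cis (- (real (k + n) * t))) sums tail_kernel R n t"
    by (simp add: tail_kernel_def q_def)
  then show ?thesis
    by (subst sums_zero_iff_shift[symmetric, of n]) (auto simp: tail_coeff_def)
qed

lemma summable_norm_tail_coeff:
  assumes "R > 1"
  shows "summable (\<lambda>k. norm (tail_coeff R n k))"
proof -
  have "norm (tail_coeff R n k) \<le> (1/R) ^ k" for k
    using assms by (simp add: tail_coeff_def norm_divide norm_power)
  then show ?thesis
    by (intro summable_comparison_test[OF _ summable_geometric[of "1/R"]]) (use assms in auto)
qed

lemma tail_coeff_mult_power: "R \<noteq> 0 \<Longrightarrow> tail_coeff R n k * of_real R ^ k = (if n \<le> k then 1 else 0)"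
  by (simp add: tail_coeff_def power_divide field_simps flip: of_real_power)

lemma continuous_on_tail_kernel: "R > 1 \<Longrightarrow> continuous_on S (tail_kernel R n)"
proof -
  assume R: "R > 1"
  have "1 - cis (- t) / of_real R \<noteq> 0" for t
  proof
    assume "1 - cis (- t) / of_real R = 0"
    then have "norm (cis (- t) / of_real R) = 1" by (simp add: right_minus_eq)
    with R show False by (simp add: norm_divide)
  qed
  then show ?thesis
    unfolding tail_kernel_def using R by (auto intro!: continuous_intros)
qed

lemma norm_tail_kernel_le:
  assumes "R \<ge> 2"
  shows "norm (tail_kernel R n t) \<le> 2 * (1/R) ^ n"
proof -
  have "1 - 1/R \<le> norm (1 - cis (- t) / of_real R)"
    using norm_triangle_ineq2[of 1 "cis (- t) / of_real R"] assms by (simp add: norm_divide)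
  moreover have "1/2 \<le> 1 - 1/R" using assms by (simp add: field_simps)
  ultimately have "1/2 \<le> norm (1 - cis (- t) / of_real R)" by linarith
  then have "(1/R) ^ n / norm (1 - cis (- t) / of_real R) \<le> (1/R) ^ n / (1/2)"
    using assms by (intro divide_left_mono) auto
  then show ?thesis
    using assms by (simp add: tail_kernel_def norm_divide norm_mult norm_power)
qed

subsection \<open>\<open>n\<close>-th roots and growth of coefficients\<close>

lemma le_power_if_powr_root_le:
  fixes x \<rho> :: real
  assumes "0 \<le> x" "0 < k" "x powr (1 / real k) \<le> \<rho>"
  shows "x \<le> \<rho> ^ k"
proof (cases "x = 0")
  case True
  then show ?thesis using assms(3) by simp
next
  case False
  then have "x = (x powr (1 / real k)) ^ k"
    using assms(1,2) by (simp add: powr_realpow [symmetric] powr_powr)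
  also have "\<dots> \<le> \<rho> ^ k" using assms(3) by (intro power_mono) auto
  finally show ?thesis .
qed

lemma eventually_le_power_if_powr_root_tendsto_0:
  fixes E :: "nat \<Rightarrow> real"
  assumes "\<And>n. 0 \<le> E n" and "(\<lambda>n. E n powr (1 / real n)) \<longlonglongrightarrow> 0" and "\<rho> > 0"
  shows "eventually (\<lambda>n. E n \<le> \<rho> ^ n) sequentially"
proof -
  have "eventually (\<lambda>n. E n powr (1 / real n) < \<rho>) sequentially"
    using assms(2,3) by (auto simp: tendsto_iff dist_real_def)
  with eventually_gt_at_top[of 0] show ?thesis
    by eventually_elim (auto intro: le_power_if_powr_root_le assms(1))
qed

lemma powr_root_tendsto_0_if_geometric_bounds:
  fixes E :: "nat \<Rightarrow> real"
  assumes nonneg: "\<And>n. 0 \<le> E n" and bounds: "\<And>\<rho>. \<rho> > 0 \<Longrightarrow> \<exists>C. \<forall>n. E n \<le> C * \<rho> ^ n"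
  shows "(\<lambda>n. E n powr (1 / real n)) \<longlonglongrightarrow> 0"
  unfolding tendsto_iff dist_real_def
proof (intro allI impI)
  fix e :: real assume e: "e > 0"
  obtain C where C: "\<And>n. E n \<le> C * (e/2) ^ n" using bounds[of "e/2"] e by auto
  have C0: "0 \<le> C" using C[of 0] nonneg[of 0] by simp
  have "(\<lambda>n. (C + 1) powr (1 / real n)) \<longlonglongrightarrow> (C + 1) powr 0"
    using C0 by (intro tendsto_powr tendsto_const lim_const_over_n) simp_all
  then have "eventually (\<lambda>n. (C + 1) powr (1 / real n) < 2) sequentially"
    by (intro order_tendstoD(2)) auto
  with eventually_gt_at_top[of 0]
  show "eventually (\<lambda>n. \<bar>E n powr (1 / real n) - 0\<bar> < e) sequentially"
  proof eventually_elim
    case (elim n)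
    have "E n powr (1 / real n) \<le> ((C + 1) * (e/2) ^ n) powr (1 / real n)"
      using C[of n] e by (intro powr_mono2 nonneg) (auto intro: order_trans mult_right_mono)
    also have "\<dots> = (C + 1) powr (1 / real n) * (e/2)"
      using elim e C0 by (simp add: powr_mult powr_realpow [symmetric] powr_powr)
    also have "\<dots> < 2 * (e/2)"
      using elim e by (intro mult_strict_right_mono) auto
    finally show ?case using nonneg[of n] by simp
  qed
qed

lemma entire_if_coeffs_eventually_le_power:
  fixes c :: "nat \<Rightarrow> complex"
  assumes "\<And>\<rho>. \<rho> > 0 \<Longrightarrow> eventually (\<lambda>k. norm (c k) \<le> \<rho> ^ k) sequentially"
  shows "(\<lambda>w. \<Sum>k. c k * w ^ k) holomorphic_on UNIV"
    and "(\<lambda>k. c k * w ^ k) sums (\<Sum>k. c k * w ^ k)"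
proof -
  have summable: "summable (\<lambda>k. c k * w ^ k)" for w :: complex
  proof -
    define \<rho> where "\<rho> = 1 / (2 * (norm w + 1))"
    have \<rho>: "\<rho> > 0" "\<rho> * norm w \<le> 1/2"
      by (auto simp: \<rho>_def field_simps add_pos_nonneg)
    have "eventually (\<lambda>k. norm (c k * w ^ k) \<le> (1/2) ^ k) sequentially"
      using assms[OF \<rho>(1)]
    proof eventually_elim
      case (elim k)
      have "norm (c k * w ^ k) \<le> \<rho> ^ k * norm w ^ k"
        unfolding norm_mult norm_power using elim by (intro mult_right_mono) auto
      also have "\<dots> \<le> (1/2) ^ k"
        unfolding power_mult_distrib [symmetric] using \<rho> by (intro power_mono) auto
      finally show ?case .
    qed
    then show ?thesis
      by (rule summable_comparison_test_ev) (simp add: summable_geometric)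
  qed
  then show "(\<lambda>k. c k * w ^ k) sums (\<Sum>k. c k * w ^ k)"
    by (rule summable_sums)
  show "(\<lambda>w. \<Sum>k. c k * w ^ k) holomorphic_on UNIV"
  proof -
    have "(\<lambda>w. \<Sum>k. c k * w ^ k) holomorphic_on ball 0 r" for r
      by (rule power_series_holomorphic) (use summable in \<open>auto intro: summable_sums\<close>)
    then show ?thesis
      by (auto simp: holomorphic_on_def field_differentiable_at_within
          intro: holomorphic_on_imp_differentiable_at[of _ "ball 0 (norm x + 1)" x for x])
  qed
qed

subsection \<open>Taylor coefficients and best approximation\<close>

lemma entire_taylor_sums:
  assumes "H holomorphic_on UNIV"
  shows "(\<lambda>k. (deriv ^^ k) H 0 / fact k * w ^ k) sums H w"
proof -
  have "H holomorphic_on ball 0 (norm w + 1)"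
    using assms by (rule holomorphic_on_subset) auto
  from holomorphic_power_series[OF this, of w] show ?thesis by simp
qed

lemma summable_norm_power_series_in_disc:
  fixes c :: "nat \<Rightarrow> complex" and z :: complex
  assumes "\<forall>w\<in>ball 0 1. (\<lambda>j. c j * w ^ j) sums f w" and "norm z < 1"
  shows "summable (\<lambda>j. norm (c j) * norm z ^ j)"
proof -
  define r where "r = (1 + norm z) / 2"
  have "norm (complex_of_real r) = r" "r < 1"
    using assms(2) unfolding norm_of_real by (simp_all add: r_def)
  then have "summable (\<lambda>j. c j * complex_of_real r ^ j)"
    using assms(1) by (auto simp: sums_iff)
  from powser_insidea[OF this, of z] \<open>norm (complex_of_real r) = r\<close> assms(2) show ?thesis
    by (simp add: norm_mult norm_power r_def)
qed

lemma sums_polynomial: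
  fixes b :: "nat \<Rightarrow> 'a::{real_normed_algebra_1}"
  shows "(\<lambda>k. (if k < n then b k else 0) * w ^ k) sums (\<Sum>k<n. b k * w ^ k)"
proof -
  have "(\<lambda>k. (if k < n then b k else 0) * w ^ k) = (\<lambda>k. if k \<in> {..<n} then b k * w ^ k else 0)"
    by auto
  then show ?thesis using sums_If_finite_set[of "{..<n}" "\<lambda>k. b k * w ^ k"] by simp
qed

definition disc_monom :: "nat \<Rightarrow> complex \<Rightarrow> complex" where
  "disc_monom k = restrD (\<lambda>z. z ^ k)"

locale disc_function_space =
  fixes X :: "(complex \<Rightarrow> complex) set" and N :: "(complex \<Rightarrow> complex) \<Rightarrow> real"
  assumes banach: "banach_fun_space X N"
    and entire: "contains_entire X"
    and conv: "conv_bound X N"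
begin

lemma holomorphic_on_disc: "f \<in> X \<Longrightarrow> f holomorphic_on ball 0 1"
  using banach by (auto simp: banach_fun_space_def analytic_on_open)

lemma vanishes_outside_disc: "f \<in> X \<Longrightarrow> z \<notin> ball 0 1 \<Longrightarrow> f z = 0"
  using banach by (auto simp: banach_fun_space_def)

lemma zero_mem: "(\<lambda>z. 0) \<in> X"
  using banach by (simp add: banach_fun_space_def)

lemma add_mem: "f \<in> X \<Longrightarrow> g \<in> X \<Longrightarrow> (\<lambda>z. f z + g z) \<in> X"
  using banach by (simp add: banach_fun_space_def)

lemma scale_mem: "f \<in> X \<Longrightarrow> (\<lambda>z. c * f z) \<in> X"
  using banach by (simp add: banach_fun_space_def)

lemma N_nonneg: "f \<in> X \<Longrightarrow> 0 \<le> N f"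
  using banach by (simp add: banach_fun_space_def)

lemma N_eq_0_iff: "f \<in> X \<Longrightarrow> N f = 0 \<longleftrightarrow> f = (\<lambda>z. 0)"
  using banach by (simp add: banach_fun_space_def)

lemma N_scale: "f \<in> X \<Longrightarrow> N (\<lambda>z. c * f z) = cmod c * N f"
  using banach by (simp add: banach_fun_space_def)

lemma N_triangle: "f \<in> X \<Longrightarrow> g \<in> X \<Longrightarrow> N (\<lambda>z. f z + g z) \<le> N f + N g"
  using banach by (simp add: banach_fun_space_def)

lemma Cauchy_limit:
  assumes "\<And>n. u n \<in> X" and "\<And>e. e > 0 \<Longrightarrow> \<exists>M. \<forall>m\<ge>M. \<forall>n\<ge>M. N (\<lambda>z. u m z - u n z) < e"
  shows "\<exists>F\<in>X. (\<lambda>n. N (\<lambda>z. u n z - F z)) \<longlonglongrightarrow> 0"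
  using banach assms unfolding banach_fun_space_def by blast

lemma N_zero: "N (\<lambda>z. 0) = 0"
  using N_eq_0_iff[OF zero_mem] by simp

lemma diff_mem: "f \<in> X \<Longrightarrow> g \<in> X \<Longrightarrow> (\<lambda>z. f z - g z) \<in> X"
  using add_mem[of f "\<lambda>z. (-1) * g z"] scale_mem[of g "-1"] by simp

lemma N_diff_commute: "f \<in> X \<Longrightarrow> g \<in> X \<Longrightarrow> N (\<lambda>z. f z - g z) = N (\<lambda>z. g z - f z)"
  using N_scale[OF diff_mem[of f g], of "-1"] by simp

lemma restrD_mem: "h holomorphic_on UNIV \<Longrightarrow> restrD h \<in> X"
  using entire by (simp add: contains_entire_def)

lemma polys_subset: "polys n \<subseteq> X"
  unfolding polys_def by (auto intro!: restrD_mem holomorphic_intros)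

lemma disc_monom_mem: "disc_monom k \<in> X"
  unfolding disc_monom_def by (rule restrD_mem) (auto intro: holomorphic_intros)

lemma N_disc_monom_pos: "0 < N (disc_monom k)"
proof -
  have "disc_monom k (1/2) \<noteq> 0" by (simp add: disc_monom_def restrD_def)
  then have "disc_monom k \<noteq> (\<lambda>z. 0)" by metis
  then show ?thesis
    using N_eq_0_iff[OF disc_monom_mem] N_nonneg[OF disc_monom_mem] by (simp add: less_le)
qed

lemma sum_mem: "(\<And>i. i \<in> I \<Longrightarrow> \<phi> i \<in> X) \<Longrightarrow> (\<lambda>z. \<Sum>i\<in>I. \<phi> i z) \<in> X"
  by (induction I rule: infinite_finite_induct) (auto intro: zero_mem add_mem)

lemma N_sum_le: "(\<And>i. i \<in> I \<Longrightarrow> \<phi> i \<in> X) \<Longrightarrow> N (\<lambda>z. \<Sum>i\<in>I. \<phi> i z) \<le> (\<Sum>i\<in>I. N (\<phi> i))"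
proof (induction I rule: infinite_finite_induct)
  case (infinite I)
  then show ?case by (simp add: N_zero)
next
  case empty
  then show ?case by (simp add: N_zero)
next
  case (insert i I)
  then show ?case
    using N_triangle[of "\<phi> i" "\<lambda>z. \<Sum>i\<in>I. \<phi> i z"] sum_mem[of I \<phi>] by fastforce
qed

lemma summable_N_imp_limit:
  assumes \<phi>: "\<And>j. \<phi> j \<in> X" and summable: "summable (\<lambda>j. N (\<phi> j))"
  obtains F where "F \<in> X" and "(\<lambda>n. N (\<lambda>z. (\<Sum>j<n. \<phi> j z) - F z)) \<longlonglongrightarrow> 0"
proof -
  define u where "u n = (\<lambda>z. \<Sum>j<n. \<phi> j z)" for n
  have u: "u n \<in> X" for n
    unfolding u_def by (rule sum_mem) (rule \<phi>)
  have tail: "N (\<lambda>z. u m z - u n z) \<le> (\<Sum>j\<in>{n..<m}. N (\<phi> j))" if "n \<le> m" for m n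
  proof -
    have "(\<lambda>z. u m z - u n z) = (\<lambda>z. \<Sum>j\<in>{n..<m}. \<phi> j z)"
      using that by (simp add: u_def fun_eq_iff lessThan_atLeast0 sum_diff_nat_ivl)
    then show ?thesis using N_sum_le[of "{n..<m}" \<phi>] \<phi> by simp
  qed
  have Cauchy: "\<exists>M. \<forall>m\<ge>M. \<forall>n\<ge>M. N (\<lambda>z. u m z - u n z) < e" if e: "e > 0" for e
  proof -
    obtain M where M: "\<And>m n. m \<ge> M \<Longrightarrow> norm (\<Sum>j\<in>{m..<n}. N (\<phi> j)) < e"
      using summable e unfolding summable_Cauchy by blast
    have "N (\<lambda>z. u m z - u n z) < e" if "n \<le> m" "n \<ge> M" for m n
      using tail[OF that(1)] M[OF that(2), of m] by simp
    then show ?thesis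
      using N_diff_commute[OF u u] by (metis nle_le order_trans)
  qed
  obtain F where "F \<in> X" "(\<lambda>n. N (\<lambda>z. u n z - F z)) \<longlonglongrightarrow> 0"
    using Cauchy_limit[OF u Cauchy] by blast
  then show ?thesis
    using that by (simp add: u_def)
qed

lemma taylor_expansion: "f \<in> X \<Longrightarrow> \<exists>c. \<forall>w\<in>ball 0 1. (\<lambda>j. c j * w ^ j) sums f w"
  using holomorphic_power_series[OF holomorphic_on_disc]
  by (intro exI[of _ "\<lambda>n. (deriv ^^ n) f 0 / fact n"]) force

text \<open>The convolution in (iii) acts on Taylor coefficients as multiplication by the Fourier
  coefficients of the kernel.\<close>

lemma coeff_multiplier_bound:
  fixes c d :: "nat \<Rightarrow> complex" and g :: "real \<Rightarrow> complex"
  assumes G: "G \<in> X" and c: "\<forall>w\<in>ball 0 1. (\<lambda>j. c j * w ^ j) sums G w"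
    and dsum: "summable (\<lambda>k. norm (d k))"
    and gs: "\<And>t. (\<lambda>k. d k * cis (- (real k * t))) sums g t"
    and gcont: "continuous_on {0..2*pi} g" and gB: "\<And>t. t \<in> {0..2*pi} \<Longrightarrow> norm (g t) \<le> B"
  shows "restrD (\<lambda>z. \<Sum>k. d k * c k * z ^ k) \<in> X"
    and "N (restrD (\<lambda>z. \<Sum>k. d k * c k * z ^ k)) \<le> B * N G"
proof -
  define F where "F = restrD (\<lambda>z. (1 / (2 * pi)) * (LINT t:{0..2*pi}|lborel. G (z * cis t) * g t))"
  have gi: "set_integrable lborel {0..2*pi} g"
    by (rule borel_integrable_atLeastAtMost'[OF gcont])
  from conv G gi have FX: "F \<in> X"
    and NF: "N F \<le> (1 / (2 * pi)) * (LINT t:{0..2*pi}|lborel. cmod (g t)) * N G"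
    unfolding conv_bound_def F_def Let_def by blast+
  have "(LINT t:{0..2*pi}|lborel. cmod (g t)) \<le> (LINT t:{0..2*pi}|lborel. B)"
    by (intro set_integral_mono borel_integrable_atLeastAtMost' gB)
       (use gcont in \<open>auto intro!: continuous_intros\<close>)
  then have "(1 / (2 * pi)) * (LINT t:{0..2*pi}|lborel. cmod (g t)) \<le> B"
    by (simp add: set_lebesgue_integral_def field_simps)
  then have NF_le: "N F \<le> B * N G"
    using NF N_nonneg[OF G] by (meson mult_right_mono order_trans)
  have "F = restrD (\<lambda>z. \<Sum>k. d k * c k * z ^ k)"
  proof
    fix z
    show "F z = restrD (\<lambda>z. \<Sum>k. d k * c k * z ^ k) z"
    proof (cases "z \<in> ball 0 1")
      case True
      then have "norm z < 1" by simp
      moreover have "(\<lambda>j. c j * (z * cis t) ^ j) sums G (z * cis t)" for t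
        using c \<open>norm z < 1\<close> by (auto simp: norm_mult)
      ultimately have "(\<lambda>k. 2 * pi * d k * c k * z ^ k)
          sums (LINT t:{0..2*pi}|lborel. G (z * cis t) * g t)"
        by (intro power_series_kernel_integral summable_norm_power_series_in_disc[OF c] dsum gs)
      from sums_divide[OF this, of "2 * pi"]
      have "(\<lambda>k. d k * c k * z ^ k)
          sums ((1 / (2 * pi)) * (LINT t:{0..2*pi}|lborel. G (z * cis t) * g t))"
        by (simp add: mult.assoc)
      then show ?thesis using True by (simp add: F_def restrD_def sums_iff)
    qed (simp add: F_def restrD_def)
  qed
  with FX NF_le show "restrD (\<lambda>z. \<Sum>k. d k * c k * z ^ k) \<in> X"
    and "N (restrD (\<lambda>z. \<Sum>k. d k * c k * z ^ k)) \<le> B * N G" by simp_all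
qed

lemma norm_coeff_le:
  assumes "G \<in> X" and "\<forall>w\<in>ball 0 1. (\<lambda>j. c j * w ^ j) sums G w"
  shows "norm (c k) * N (disc_monom k) \<le> N G"
proof -
  define d :: "nat \<Rightarrow> complex" where "d j = (if j = k then 1 else 0)" for j
  have "(\<lambda>j. norm (d j)) = (\<lambda>j. if j = k then 1 else 0)"
    by (simp add: d_def fun_eq_iff)
  then have "summable (\<lambda>j. norm (d j))"
    by simp
  moreover have "(\<lambda>j. d j * cis (- (real j * t))) sums cis (- (real k * t))" for t
  proof -
    have "(\<lambda>j. d j * cis (- (real j * t))) = (\<lambda>j. if j = k then cis (- (real j * t)) else 0)"
      by (simp add: d_def fun_eq_iff)
    then show ?thesis using sums_single[of k "\<lambda>j. cis (- (real j * t))"] by simp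
  qed
  moreover have "restrD (\<lambda>z. \<Sum>j. d j * c j * z ^ j) = (\<lambda>z. c k * disc_monom k z)"
  proof -
    have "(\<lambda>j. d j * c j * z ^ j) = (\<lambda>j. if j = k then c j * z ^ j else 0)" for z
      by (simp add: d_def fun_eq_iff)
    then have "(\<Sum>j. d j * c j * z ^ j) = c k * z ^ k" for z
      using sums_unique[OF sums_single[of k "\<lambda>j. c j * z ^ j"]] by simp
    then show ?thesis by (simp add: fun_eq_iff restrD_def disc_monom_def)
  qed
  moreover have "continuous_on {0..2*pi} (\<lambda>t. cis (- (real k * t)))"
    by (intro continuous_intros)
  ultimately have "N (\<lambda>z. c k * disc_monom k z) \<le> 1 * N G"
    using coeff_multiplier_bound(2)[OF assms, of d "\<lambda>t. cis (- (real k * t))" 1] by simp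
  then show ?thesis
    by (simp add: N_scale[OF disc_monom_mem])
qed

lemma polys_nonempty: "polys k \<noteq> {}"
  unfolding polys_def by auto

lemma N_diff_poly_nonneg: "f \<in> X \<Longrightarrow> p \<in> polys k \<Longrightarrow> 0 \<le> N (\<lambda>z. f z - p z)"
  using N_nonneg diff_mem polys_subset by blast

lemma best_approx_nonneg: "f \<in> X \<Longrightarrow> 0 \<le> best_approx N k f"
  unfolding best_approx_def by (rule cINF_greatest[OF polys_nonempty]) (rule N_diff_poly_nonneg)

lemma best_approx_le: "f \<in> X \<Longrightarrow> p \<in> polys k \<Longrightarrow> best_approx N k f \<le> N (\<lambda>z. f z - p z)"
  unfolding best_approx_def
  by (rule cINF_lower) (auto intro!: bdd_belowI[where m=0] N_diff_poly_nonneg)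

lemma norm_coeff_le_best_approx:
  assumes f: "f \<in> X" and c: "\<forall>w\<in>ball 0 1. (\<lambda>j. c j * w ^ j) sums f w"
  shows "norm (c k) * N (disc_monom k) \<le> best_approx N k f"
  unfolding best_approx_def
proof (rule cINF_greatest[OF polys_nonempty])
  fix p assume p: "p \<in> polys k"
  then obtain b where p_eq: "p = restrD (\<lambda>z. \<Sum>i<k. b i * z ^ i)" unfolding polys_def by auto
  have "\<forall>w\<in>ball 0 1. (\<lambda>j. (c j - (if j < k then b j else 0)) * w ^ j) sums (f w - p w)"
    using sums_diff[OF c[rule_format] sums_polynomial] by (simp add: p_eq restrD_def algebra_simps)
  from norm_coeff_le[OF diff_mem[OF f polys_subset[THEN subsetD, OF p]] this, of k]
  show "norm (c k) * N (disc_monom k) \<le> N (\<lambda>z. f z - p z)" by simp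
qed

lemma coeff_tendsto:
  assumes u: "\<And>n. u n \<in> X" and a: "\<And>n. \<forall>w\<in>ball 0 1. (\<lambda>j. a n j * w ^ j) sums u n w"
    and F: "F \<in> X" and c: "\<forall>w\<in>ball 0 1. (\<lambda>j. c j * w ^ j) sums F w"
    and lim: "(\<lambda>n. N (\<lambda>z. u n z - F z)) \<longlonglongrightarrow> 0"
  shows "(\<lambda>n. a n k) \<longlonglongrightarrow> c k"
proof -
  have "norm (a n k - c k) * N (disc_monom k) \<le> N (\<lambda>z. u n z - F z)" for n
  proof -
    have "\<forall>w\<in>ball 0 1. (\<lambda>j. (a n j - c j) * w ^ j) sums (u n w - F w)"
      using sums_diff[OF a[of n, rule_format] c[rule_format]] by (simp add: left_diff_distrib)
    from norm_coeff_le[OF diff_mem[OF u F] this] show ?thesis .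
  qed
  then have "\<forall>n. norm (a n k - c k) \<le> N (\<lambda>z. u n z - F z) / N (disc_monom k)"
    using N_disc_monom_pos by (simp add: pos_le_divide_eq)
  from Lim_null_comparison[OF always_eventually[OF this] tendsto_divide_zero[OF lim]]
  show ?thesis by (simp add: LIM_zero_iff)
qed

lemma mem_with_taylor_coeffs:
  fixes b :: "nat \<Rightarrow> complex"
  assumes summable: "summable (\<lambda>k. norm (b k) * N (disc_monom k))"
  obtains F where "F \<in> X" and "\<forall>w\<in>ball 0 1. (\<lambda>k. b k * w ^ k) sums F w"
proof -
  define \<phi> where "\<phi> k = (\<lambda>z. b k * disc_monom k z)" for k
  have \<phi>: "\<phi> k \<in> X" for k
    unfolding \<phi>_def by (rule scale_mem[OF disc_monom_mem])
  have "summable (\<lambda>k. N (\<phi> k))"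
    using summable by (simp add: \<phi>_def N_scale[OF disc_monom_mem])
  then obtain F where F: "F \<in> X" and lim: "(\<lambda>n. N (\<lambda>z. (\<Sum>k<n. \<phi> k z) - F z)) \<longlonglongrightarrow> 0"
    using summable_N_imp_limit \<phi> by blast
  obtain c where c: "\<forall>w\<in>ball 0 1. (\<lambda>k. c k * w ^ k) sums F w"
    using taylor_expansion[OF F] by blast
  have partial_sums_mem: "(\<lambda>z. \<Sum>k<n. \<phi> k z) \<in> X" for n
    by (rule sum_mem) (rule \<phi>)
  have partial_sums: "\<forall>w\<in>ball 0 1. (\<lambda>j. (if j < n then b j else 0) * w ^ j) sums (\<Sum>k<n. \<phi> k w)"
    for n
    using sums_polynomial[of n b] by (simp add: \<phi>_def disc_monom_def restrD_def)
  have "c k = b k" for k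
  proof -
    have "(\<lambda>n. if k < n then b k else 0) \<longlonglongrightarrow> c k"
      using coeff_tendsto[OF partial_sums_mem partial_sums F c lim] .
    moreover have "(\<lambda>n. if k < n then b k else 0) \<longlonglongrightarrow> b k"
      by (rule tendsto_eventually) (rule eventually_mono[OF eventually_gt_at_top[of k]], simp)
    ultimately show ?thesis by (rule LIMSEQ_unique)
  qed
  with F c show ?thesis using that by auto
qed

text \<open>Otherwise the series of the \<open>2^k z^k\<close> with \<open>\<parallel>z^k\<parallel> < 4^-k\<close> would converge in \<open>X\<close>,
  although its Taylor series diverges at \<open>3/4\<close>.\<close>

lemma eventually_N_disc_monom_ge: "eventually (\<lambda>k. (1/4) ^ k \<le> N (disc_monom k)) sequentially"
proof (rule ccontr)
  define P where "P k \<longleftrightarrow> N (disc_monom k) < (1/4) ^ k" for k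
  assume "\<not> ?thesis"
  then have freq: "frequently P sequentially"
    by (simp add: P_def frequently_def not_less)
  define b :: "nat \<Rightarrow> complex" where "b k = (if P k then 2 ^ k else 0)" for k
  have b_bound: "norm (b k) * N (disc_monom k) \<le> (1/2) ^ k" for k
  proof (cases "P k")
    case True
    then have "norm (b k) * N (disc_monom k) = 2 ^ k * N (disc_monom k)"
      by (simp add: b_def norm_power)
    also have "\<dots> \<le> 2 ^ k * (1/4) ^ k"
      using True by (intro mult_left_mono) (simp_all add: P_def)
    also have "\<dots> = (1/2) ^ k"
      by (simp add: power_mult_distrib [symmetric])
    finally show ?thesis .
  qed (simp add: b_def)
  have "summable (\<lambda>k. norm (b k) * N (disc_monom k))"
    by (intro summable_comparison_test[OF _ summable_geometric[of "1/2"]])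
       (use b_bound N_nonneg[OF disc_monom_mem] in auto)
  then obtain F where "F \<in> X" and F: "\<forall>w\<in>ball 0 1. (\<lambda>k. b k * w ^ k) sums F w"
    by (rule mem_with_taylor_coeffs)
  have "(3/4 :: complex) \<in> ball 0 1" by simp
  then have "(\<lambda>k. b k * (3/4) ^ k) \<longlonglongrightarrow> 0"
    using F by (intro summable_LIMSEQ_zero) (auto simp: sums_iff)
  then have "eventually (\<lambda>k. norm (b k * (3/4) ^ k) < 1) sequentially"
    by (intro order_tendstoD(2)[OF tendsto_norm_zero]) auto
  from frequently_ex[OF frequently_eventually_conj[OF freq this]]
  obtain k where "P k" and small: "norm (b k * (3/4) ^ k) < 1" by blast
  then have "norm (b k * (3/4) ^ k) = (3/2) ^ k"
    by (simp add: b_def norm_mult norm_power power_mult_distrib [symmetric])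
  moreover have "(1::real) \<le> (3/2) ^ k"
    by (rule one_le_power) simp
  ultimately show False using small by simp
qed

lemma restrD_dilation_mem: "H holomorphic_on UNIV \<Longrightarrow> restrD (\<lambda>w. H (of_real R * w)) \<in> X"
  by (rule restrD_mem, rule holomorphic_on_compose_gen[OF _ _, unfolded o_def])
     (auto intro: holomorphic_intros)

lemma best_approx_le_geometric:
  assumes f: "f \<in> X" and H: "H holomorphic_on UNIV" and fH: "\<forall>z\<in>ball 0 1. f z = H z"
    and R: "R \<ge> 2"
  shows "best_approx N n f \<le> 2 * (1/R) ^ n * N (restrD (\<lambda>w. H (of_real R * w)))"
proof -
  define a where "a k = (deriv ^^ k) H 0 / fact k" for k
  have a: "(\<lambda>k. a k * w ^ k) sums H w" for w
    unfolding a_def by (rule entire_taylor_sums[OF H])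
  define G where "G = restrD (\<lambda>w. H (of_real R * w))"
  have G_sums: "\<forall>w\<in>ball 0 1. (\<lambda>k. (a k * of_real R ^ k) * w ^ k) sums G w"
    using a[of "of_real R * _"] by (simp add: G_def restrD_def power_mult_distrib mult.assoc)
  define p where "p = restrD (\<lambda>z. \<Sum>k<n. a k * z ^ k)"
  have tail: "(\<Sum>k. tail_coeff R n k * (a k * of_real R ^ k) * z ^ k) = H z - (\<Sum>k<n. a k * z ^ k)"
    for z
  proof -
    have "(\<lambda>k. tail_coeff R n k * (a k * of_real R ^ k) * z ^ k)
        = (\<lambda>k. a k * z ^ k - (if k < n then a k else 0) * z ^ k)"
      using tail_coeff_mult_power[of R n] R by (auto simp: fun_eq_iff mult_ac)
    then show ?thesis
      using sums_unique[OF sums_diff[OF a sums_polynomial[of n a z]]] by simp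
  qed
  have f_minus_p: "restrD (\<lambda>z. \<Sum>k. tail_coeff R n k * (a k * of_real R ^ k) * z ^ k)
      = (\<lambda>z. f z - p z)"
    using fH vanishes_outside_disc[OF f] by (auto simp: fun_eq_iff restrD_def p_def tail)
  have R1: "R > 1" using R by simp
  have "N (\<lambda>z. f z - p z) \<le> 2 * (1/R) ^ n * N G"
    using coeff_multiplier_bound(2)[OF restrD_dilation_mem[OF H] G_sums[unfolded G_def]
        summable_norm_tail_coeff[OF R1, of n] tail_kernel_sums[OF R1, of n]
        continuous_on_tail_kernel[OF R1] norm_tail_kernel_le[OF R, of n]]
    unfolding f_minus_p G_def .
  moreover have "p \<in> polys n"
    unfolding p_def polys_def by auto
  ultimately show ?thesis
    using best_approx_le[OF f] G_def by fastforce
qed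

lemma powr_root_best_approx_tendsto_0_if_entire:
  assumes f: "f \<in> X" and H: "H holomorphic_on UNIV" and fH: "\<forall>z\<in>ball 0 1. f z = H z"
  shows "(\<lambda>n. best_approx N n f powr (1 / real n)) \<longlonglongrightarrow> 0"
proof (rule powr_root_tendsto_0_if_geometric_bounds)
  show "0 \<le> best_approx N n f" for n
    by (rule best_approx_nonneg[OF f])
  fix \<rho> :: real assume \<rho>: "\<rho> > 0"
  define R where "R = max 2 (1/\<rho>)"
  define C where "C = 2 * N (restrD (\<lambda>w. H (of_real R * w)))"
  have C: "0 \<le> C"
    unfolding C_def using N_nonneg[OF restrD_dilation_mem[OF H]] by simp
  have "2 \<le> R" "1/\<rho> \<le> R"
    by (simp_all add: R_def)
  then have R: "2 \<le> R" "1/R \<le> \<rho>"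
    using \<rho> by (simp_all add: divide_le_eq mult.commute)
  have "best_approx N n f \<le> C * \<rho> ^ n" for n
  proof -
    have "best_approx N n f \<le> C * (1/R) ^ n"
      using best_approx_le_geometric[OF f H fH R(1), of n] by (simp add: C_def mult_ac)
    also have "\<dots> \<le> C * \<rho> ^ n"
      using R by (intro mult_left_mono power_mono C) auto
    finally show ?thesis .
  qed
  then show "\<exists>C. \<forall>n. best_approx N n f \<le> C * \<rho> ^ n" by blast
qed

lemma entire_if_powr_root_best_approx_tendsto_0:
  assumes f: "f \<in> X" and lim: "(\<lambda>n. best_approx N n f powr (1 / real n)) \<longlonglongrightarrow> 0"
  shows "\<exists>h. h holomorphic_on UNIV \<and> (\<forall>z\<in>ball 0 1. f z = h z)"
proof -
  obtain c where c: "\<forall>w\<in>ball 0 1. (\<lambda>j. c j * w ^ j) sums f w"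
    using taylor_expansion[OF f] by blast
  have "eventually (\<lambda>k. norm (c k) \<le> \<rho> ^ k) sequentially" if "\<rho> > 0" for \<rho>
  proof -
    have "eventually (\<lambda>k. best_approx N k f \<le> (\<rho>/4) ^ k) sequentially"
      using that by (intro eventually_le_power_if_powr_root_tendsto_0 best_approx_nonneg[OF f] lim) auto
    with eventually_N_disc_monom_ge show ?thesis
    proof eventually_elim
      case (elim k)
      have "norm (c k) * (1/4) ^ k \<le> norm (c k) * N (disc_monom k)"
        using elim(1) by (intro mult_left_mono) auto
      also have "\<dots> \<le> best_approx N k f"
        by (rule norm_coeff_le_best_approx[OF f c])
      also have "\<dots> \<le> (\<rho>/4) ^ k"
        by (rule elim(2))
      finally show ?case
        by (simp add: power_divide field_simps)
    qed
  qed
  then have "(\<lambda>w. \<Sum>k. c k * w ^ k) holomorphic_on UNIV"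
    and "\<And>w. (\<lambda>k. c k * w ^ k) sums (\<Sum>k. c k * w ^ k)"
    using entire_if_coeffs_eventually_le_power by blast+
  then show ?thesis
    using c sums_unique2 by blast
qed

end

theorem theorem2p1:
  fixes X :: "(complex \<Rightarrow> complex) set" and N :: "(complex \<Rightarrow> complex) \<Rightarrow> real"
    and f :: "complex \<Rightarrow> complex"
  assumes "banach_fun_space X N"
    and "rot_invariant X N"
    and "contains_entire X"
    and "conv_bound X N"
    and "f \<in> X"
  shows "(\<exists>h. h holomorphic_on UNIV \<and> (\<forall>z\<in>ball 0 1. f z = h z)) \<longleftrightarrow>
         (\<lambda>n. best_approx N n f powr (1 / real n)) \<longlonglongrightarrow> 0"
proof -
  interpret disc_function_space X N
    using assms(1,3,4) by unfold_locales
  show ?thesis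
    using powr_root_best_approx_tendsto_0_if_entire[OF assms(5)]
      entire_if_powr_root_best_approx_tendsto_0[OF assms(5)] by blast
qed

end
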